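(* Let $d\ge3$, $|\lambda|\le 2\sqrt{d-1}$, and let $v_1,\dots,v_d,w\in\mathbb{R}^d$ be unit vectors with $(v_i,v_j)=(\lambda^2-d)/(d(d-1))$ for $i\ne j$ and $(v_i,w)=\lambda/d$ for all $i$. Let $\alpha,\beta\in\mathbb{R}$ be such that the vectors $a_i=\alpha w+\beta v_i$ and $b_i=\alpha v_i+\beta w$ satisfy $(a_i,b_i)=0$ and $\|a_i\|_2=\|b_i\|_2=1$ for all $1\le i\le d$. Then there are numbers $t_1,t_2\ge0$ with $t_1+t_2=1$ such that for every $u\in\mathbb{R}^d$, $$\|u\|_2^2=\sum_{i=1}^d\Big(t_1(u,a_i)^2+t_2(u,b_i)^2\Big).$$
   Context: $(\cdot,\cdot)$ denotes the standard inner product on $\mathbb{R}^d$. *)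

theory Defs
  imports "HOL-Analysis.Analysis"
begin

end

theory Submission
  imports Defs
begin

text \<open>
  Put \<open>c = \<lambda>/d\<close> and \<open>e\<^sub>i = v\<^sub>i - c w\<close>. These vectors are orthogonal to \<open>w\<close>, sum to zero
  and have Gram matrix \<open>h (I - J/d)\<close> with \<open>h = d(1 - c\<^sup>2)/(d - 1) > 0\<close>; by dimension count
  \<open>w\<close> together with the \<open>e\<^sub>i\<close> spans \<open>\<real>\<^sup>d\<close>, and hence
  \<open>\<Sum>\<^sub>i (u,e\<^sub>i) e\<^sub>i = h (u - (u,w) w)\<close>. This expresses \<open>\<Sum>\<^sub>i (u,v\<^sub>i)\<^sup>2\<close> and
  \<open>\<Sum>\<^sub>i (u,v\<^sub>i)\<close> through \<open>\<parallel>u\<parallel>\<^sup>2\<close> and \<open>(u,w)\<close>. The conditions on \<open>a\<^sub>i, b\<^sub>i\<close> determine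
  \<open>\<alpha>\<^sup>2 + \<beta>\<^sup>2\<close> and \<open>\<alpha>\<beta>\<close>, after which the identity holds as soon as
  \<open>t\<^sub>1\<beta>\<^sup>2 + t\<^sub>2\<alpha>\<^sup>2 = (d-1)/d (\<alpha>\<^sup>2 + \<beta>\<^sup>2)\<close>; such a convex combination exists
  exactly because \<open>\<lambda>\<^sup>2 \<le> 4(d-1)\<close>.
\<close>

text \<open>A family with Gram matrix \<open>h (I - J/n)\<close>, \<open>h > 0\<close>, is the vertex set of a regular simplex
  centred at the origin, whence the names below.\<close>

lemma inner_sum_simplex:
  fixes e :: "'i::finite \<Rightarrow> 'a::real_inner"
  assumes gram: "\<And>i j. e i \<bullet> e j = (if i = j then h else 0) - h / CARD('i)"
  shows "(\<Sum>i\<in>A. c i *\<^sub>R e i) \<bullet> e j = (if j \<in> A then h * c j else 0) - h / CARD('i) * sum c A"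
proof -
  have "(\<Sum>i\<in>A. c i *\<^sub>R e i) \<bullet> e j
      = (\<Sum>i\<in>A. if i = j then h * c i else 0) - (\<Sum>i\<in>A. h / CARD('i) * c i)"
    by (simp add: inner_sum_left gram right_diff_distrib sum_subtractf mult.commute
        if_distrib[of "(*) (c _)"] cong: if_cong)
  then show ?thesis by (simp add: sum_distrib_left)
qed

lemma simplex_sum_eq_0:
  fixes e :: "'i::finite \<Rightarrow> 'a::real_inner"
  assumes gram: "\<And>i j. e i \<bullet> e j = (if i = j then h else 0) - h / CARD('i)"
  shows "(\<Sum>i\<in>UNIV. e i) = 0"
proof -
  have "(\<Sum>i\<in>UNIV. 1 *\<^sub>R e i) \<bullet> e j = 0" for j
    by (simp add: inner_sum_simplex[OF gram] del: scaleR_one)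
  then have "(\<Sum>i\<in>UNIV. e i) \<bullet> (\<Sum>j\<in>UNIV. e j) = 0"
    by (simp add: inner_sum_right)
  then show ?thesis by simp
qed

lemma inj_simplex:
  fixes e :: "'i::finite \<Rightarrow> 'a::real_inner"
  assumes gram: "\<And>i j. e i \<bullet> e j = (if i = j then h else 0) - h / CARD('i)"
    and "h \<noteq> 0"
  shows "inj e"
proof (rule injI, rule ccontr)
  fix i j assume "e i = e j" "i \<noteq> j"
  then have "e i \<bullet> e i = e i \<bullet> e j" by simp
  with \<open>i \<noteq> j\<close> \<open>h \<noteq> 0\<close> show False by (simp add: gram)
qed

lemma independent_simplex_delete:
  fixes e :: "'i::finite \<Rightarrow> 'a::real_inner"
  assumes gram: "\<And>i j. e i \<bullet> e j = (if i = j then h else 0) - h / CARD('i)"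
    and "h \<noteq> 0"
  shows "independent (e ` (UNIV - {k}))"
proof (rule independent_if_scalars_zero)
  fix f x
  assume comb: "(\<Sum>x\<in>e ` (UNIV - {k}). f x *\<^sub>R x) = 0" and x: "x \<in> e ` (UNIV - {k})"
  define J where "J = UNIV - {k}"
  define n where "n = real CARD('i)"
  define G where "G = (\<Sum>i\<in>J. f (e i))"
  have "n > 0" unfolding n_def by simp
  have comb_J: "(\<Sum>i\<in>J. f (e i) *\<^sub>R e i) = 0"
    using comb inj_on_subset[OF inj_simplex[OF gram \<open>h \<noteq> 0\<close>]]
    by (simp add: J_def sum.reindex)
  have "h * (f (e j) - G / n) = 0" if "j \<in> J" for j
    using arg_cong[where f="\<lambda>x. x \<bullet> e j", OF comb_J] that
    by (simp add: inner_sum_simplex[OF gram] G_def n_def right_diff_distrib)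
  then have coeff: "f (e j) = G / n" if "j \<in> J" for j
    using that \<open>h \<noteq> 0\<close> by simp
  then have "G = (\<Sum>i\<in>J. G / n)"
    unfolding G_def by (rule sum.cong[OF refl])
  also have "\<dots> = (n - 1) * G / n"
    by (simp add: J_def n_def card_Diff_singleton)
  finally have "G = 0"
    using \<open>n > 0\<close> by (simp add: field_simps)
  with x coeff show "f x = 0"
    by (auto simp: J_def)
qed (simp)

lemma span_insert_simplex:
  fixes e :: "'i::finite \<Rightarrow> 'a::euclidean_space"
  assumes gram: "\<And>i j. e i \<bullet> e j = (if i = j then h else 0) - h / CARD('i)"
    and "h \<noteq> 0" and dim: "CARD('i) = DIM('a)"
    and "w \<noteq> 0" and w_orth: "\<And>i. w \<bullet> e i = 0"
  shows "span (insert w (range e)) = UNIV"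
proof -
  obtain k :: 'i where True by simp
  define E where "E = e ` (UNIV - {k})"
  have "w \<notin> span E"
  proof
    assume "w \<in> span E"
    then have "orthogonal w w"
      by (rule orthogonal_to_span) (auto simp: E_def orthogonal_def w_orth)
    with \<open>w \<noteq> 0\<close> show False
      by (simp add: orthogonal_self)
  qed
  then have "w \<notin> E"
    using span_base by blast
  have indep: "independent (insert w E)"
    using \<open>w \<notin> span E\<close> independent_simplex_delete[OF gram \<open>h \<noteq> 0\<close>, of k]
    unfolding E_def by (rule independent_insertI)
  have "card E = CARD('i) - 1"
    using inj_on_subset[OF inj_simplex[OF gram \<open>h \<noteq> 0\<close>]]
    unfolding E_def by (simp add: card_image card_Diff_singleton)
  moreover have "finite E"
    by (simp add: E_def)
  ultimately have "dim (UNIV :: 'a set) \<le> card (insert w E)"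
    using \<open>w \<notin> E\<close> by (simp add: dim)
  with indep have "UNIV \<subseteq> span (insert w E)"
    by (intro card_ge_dim_independent) simp_all
  moreover have "span (insert w E) \<subseteq> span (insert w (range e))"
    by (rule span_mono) (auto simp: E_def)
  ultimately show ?thesis
    by blast
qed

lemma simplex_frame_operator:
  fixes e :: "'i::finite \<Rightarrow> 'a::euclidean_space"
  assumes gram: "\<And>i j. e i \<bullet> e j = (if i = j then h else 0) - h / CARD('i)"
    and "h \<noteq> 0" and dim: "CARD('i) = DIM('a)"
    and "norm w = 1" and w_orth: "\<And>i. w \<bullet> e i = 0"
  shows "(\<Sum>i\<in>UNIV. (u \<bullet> e i) *\<^sub>R e i) = h *\<^sub>R (u - (u \<bullet> w) *\<^sub>R w)"
proof -
  define r where "r = h *\<^sub>R (u - (u \<bullet> w) *\<^sub>R w) - (\<Sum>i\<in>UNIV. (u \<bullet> e i) *\<^sub>R e i)"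
  have ww: "w \<bullet> w = 1"
    using \<open>norm w = 1\<close> by (simp add: norm_eq_1)
  have e_w: "e i \<bullet> w = 0" for i
    using w_orth by (simp add: inner_commute)
  have "u \<bullet> (\<Sum>i\<in>UNIV. e i) = 0"
    by (simp add: simplex_sum_eq_0[OF gram])
  then have sum_u_e: "(\<Sum>i\<in>UNIV. u \<bullet> e i) = 0"
    by (simp add: inner_sum_right)
  have "r \<bullet> w = 0"
    by (simp add: r_def inner_diff_left inner_sum_left e_w ww)
  moreover have "r \<bullet> e j = 0" for j
    by (simp add: r_def inner_diff_left inner_sum_simplex[OF gram] w_orth sum_u_e)
  ultimately have orth_r: "orthogonal r x" if "x \<in> insert w (range e)" for x
    using that by (auto simp: orthogonal_def)
  have "w \<noteq> 0"
    using \<open>norm w = 1\<close> by auto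
  then have "r \<in> span (insert w (range e))"
    using span_insert_simplex[OF gram \<open>h \<noteq> 0\<close> dim _ w_orth] by simp
  then have "orthogonal r r"
    by (rule orthogonal_to_span) (rule orth_r)
  then have "r = 0"
    by (simp add: orthogonal_self)
  then show ?thesis
    by (simp add: r_def)
qed

lemma sum_inner_equiangular:
  fixes v :: "'i::finite \<Rightarrow> 'a::euclidean_space" and w :: 'a
  defines "n \<equiv> real CARD('i)"
  assumes dim: "CARD('i) = DIM('a)" and "CARD('i) \<ge> 2" and "c\<^sup>2 < 1"
    and v_unit: "\<And>i. norm (v i) = 1" and w_unit: "norm w = 1"
    and vv: "\<And>i j. i \<noteq> j \<Longrightarrow> v i \<bullet> v j = (n * c\<^sup>2 - 1) / (n - 1)"
    and vw: "\<And>i. v i \<bullet> w = c"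
  shows "(\<Sum>i\<in>UNIV. (u \<bullet> v i)\<^sup>2)
      = n * (1 - c\<^sup>2) / (n - 1) * (u \<bullet> u - (u \<bullet> w)\<^sup>2) + n * c\<^sup>2 * (u \<bullet> w)\<^sup>2"
    and "(\<Sum>i\<in>UNIV. u \<bullet> v i) = n * c * (u \<bullet> w)"
proof -
  define h where "h = n * (1 - c\<^sup>2) / (n - 1)"
  define e where "e i = v i - c *\<^sub>R w" for i
  have "n \<ge> 2"
    using \<open>CARD('i) \<ge> 2\<close> by (simp add: n_def)
  then have n0: "n \<noteq> 0" "n - 1 \<noteq> 0"
    by simp_all
  have "h \<noteq> 0"
    using \<open>n \<ge> 2\<close> \<open>c\<^sup>2 < 1\<close> by (simp add: h_def)
  have vv_self: "v i \<bullet> v i = 1" and ww: "w \<bullet> w = 1" for i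
    using v_unit w_unit by (simp_all add: norm_eq_1)
  have wv: "w \<bullet> v i = c" for i
    using vw by (simp add: inner_commute)
  have gram: "e i \<bullet> e j = (if i = j then h else 0) - h / CARD('i)" for i j
  proof (cases "i = j")
    case True
    have "e i \<bullet> e i = 1 - c\<^sup>2"
      by (simp add: e_def inner_diff_left inner_diff_right vw wv vv_self ww power2_eq_square)
    also have "\<dots> = h * (n - 1) / n"
      using n0 by (simp add: h_def)
    also have "\<dots> = h - h / n"
      using n0 by (simp add: field_simps)
    finally show ?thesis
      using True by (simp add: n_def)
  next
    case False
    have "e i \<bullet> e j = (n * c\<^sup>2 - 1) / (n - 1) - c\<^sup>2"
      by (simp add: e_def inner_diff_left inner_diff_right vv[OF False] vw wv ww power2_eq_square)
    also have "\<dots> = - h / n"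
      using n0 by (simp add: h_def field_simps)
    finally show ?thesis
      using False by (simp add: n_def)
  qed
  have w_orth: "w \<bullet> e i = 0" for i
    by (simp add: e_def inner_diff_right wv ww)
  have v_split: "u \<bullet> v i = u \<bullet> e i + c * (u \<bullet> w)" for i
    by (simp add: e_def inner_diff_right)
  have "u \<bullet> (\<Sum>i\<in>UNIV. e i) = 0"
    by (simp add: simplex_sum_eq_0[OF gram])
  then have sum_e: "(\<Sum>i\<in>UNIV. u \<bullet> e i) = 0"
    by (simp add: inner_sum_right)
  have "(\<Sum>i\<in>UNIV. (u \<bullet> e i)\<^sup>2) = u \<bullet> (\<Sum>i\<in>UNIV. (u \<bullet> e i) *\<^sub>R e i)"
    by (simp add: inner_sum_right power2_eq_square)
  also have "\<dots> = h * (u \<bullet> u - (u \<bullet> w)\<^sup>2)"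
    by (simp add: simplex_frame_operator[OF gram \<open>h \<noteq> 0\<close> dim w_unit w_orth]
        inner_diff_right power2_eq_square)
  finally have sum_sq_e: "(\<Sum>i\<in>UNIV. (u \<bullet> e i)\<^sup>2) = h * (u \<bullet> u - (u \<bullet> w)\<^sup>2)" .
  have "(\<Sum>i\<in>UNIV. (u \<bullet> v i)\<^sup>2)
      = (\<Sum>i\<in>UNIV. (u \<bullet> e i)\<^sup>2) + 2 * (c * (u \<bullet> w)) * (\<Sum>i\<in>UNIV. u \<bullet> e i)
        + n * (c * (u \<bullet> w))\<^sup>2"
    by (simp add: v_split power2_sum sum.distrib sum_distrib_left n_def mult_ac)
  then show "(\<Sum>i\<in>UNIV. (u \<bullet> v i)\<^sup>2) = h * (u \<bullet> u - (u \<bullet> w)\<^sup>2) + n * c\<^sup>2 * (u \<bullet> w)\<^sup>2"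
    by (simp add: sum_sq_e sum_e power_mult_distrib)
  show "(\<Sum>i\<in>UNIV. u \<bullet> v i) = n * c * (u \<bullet> w)"
    by (simp add: v_split sum.distrib sum_e n_def)
qed

lemma unit_pair_coefficients:
  fixes v w :: "'a::real_inner"
  assumes "norm v = 1" and "norm w = 1"
    and "norm (\<alpha> *\<^sub>R w + \<beta> *\<^sub>R v) = 1"
    and "(\<alpha> *\<^sub>R w + \<beta> *\<^sub>R v) \<bullet> (\<alpha> *\<^sub>R v + \<beta> *\<^sub>R w) = 0"
  shows "\<alpha>\<^sup>2 + \<beta>\<^sup>2 + 2 * (\<alpha> * \<beta>) * (v \<bullet> w) = 1"
    and "(\<alpha>\<^sup>2 + \<beta>\<^sup>2) * (v \<bullet> w) + 2 * (\<alpha> * \<beta>) = 0"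
proof -
  have vv: "v \<bullet> v = 1" and ww: "w \<bullet> w = 1"
    using assms(1,2) by (simp_all add: norm_eq_1)
  have "(\<alpha> *\<^sub>R w + \<beta> *\<^sub>R v) \<bullet> (\<alpha> *\<^sub>R w + \<beta> *\<^sub>R v) = 1"
    using assms(3) by (simp add: norm_eq_1)
  then show "\<alpha>\<^sup>2 + \<beta>\<^sup>2 + 2 * (\<alpha> * \<beta>) * (v \<bullet> w) = 1"
    by (simp add: inner_add_right inner_commute[of w v] vv ww power2_eq_square algebra_simps)
  show "(\<alpha>\<^sup>2 + \<beta>\<^sup>2) * (v \<bullet> w) + 2 * (\<alpha> * \<beta>) = 0"
    using assms(4)
    by (simp add: inner_add_right inner_commute[of w v] vv ww power2_eq_square algebra_simps)
qed

lemma convex_weights_between: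
  fixes a b k :: real
  assumes "(k - a) * (k - b) \<le> 0"
  shows "\<exists>t1 t2. t1 \<ge> 0 \<and> t2 \<ge> 0 \<and> t1 + t2 = 1 \<and> t1 * b + t2 * a = k"
proof (cases "a = b")
  case True
  with assms have "k = a"
    by (auto simp: mult_le_0_iff)
  with True show ?thesis by (intro exI[of _ 1] exI[of _ 0]) simp
next
  case False
  define t1 where "t1 = (k - a) / (b - a)"
  define t2 where "t2 = (b - k) / (b - a)"
  have "(k - a) * (b - a) \<ge> 0" and "(b - k) * (b - a) \<ge> 0"
    using assms by (smt (verit) mult_le_0_iff mult_nonneg_nonneg mult_nonpos_nonpos)+
  moreover have "t1 = (k - a) * (b - a) / (b - a)\<^sup>2" and "t2 = (b - k) * (b - a) / (b - a)\<^sup>2"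
    using False by (simp_all add: t1_def t2_def power2_eq_square)
  ultimately have "t1 \<ge> 0" and "t2 \<ge> 0"
    by simp_all
  moreover have "t1 + t2 = 1"
    using False by (simp add: t1_def t2_def add_divide_distrib[symmetric])
  moreover have "t1 * b + t2 * a = k"
  proof -
    have "t1 * b + t2 * a = k * (b - a) / (b - a)"
      by (simp add: t1_def t2_def add_divide_distrib[symmetric] algebra_simps)
    with False show ?thesis by simp
  qed
  ultimately show ?thesis by blast
qed

lemma mixing_weights_exist:
  fixes \<alpha> \<beta> c q :: real
  assumes "(\<alpha>\<^sup>2 + \<beta>\<^sup>2) * c + 2 * (\<alpha> * \<beta>) = 0" and "c\<^sup>2 \<le> 4 * q * (1 - q)"
  shows "\<exists>t1 t2. t1 \<ge> 0 \<and> t2 \<ge> 0 \<and> t1 + t2 = 1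
    \<and> t1 * \<beta>\<^sup>2 + t2 * \<alpha>\<^sup>2 = q * (\<alpha>\<^sup>2 + \<beta>\<^sup>2)"
proof (rule convex_weights_between)
  define s where "s = \<alpha>\<^sup>2 + \<beta>\<^sup>2"
  have "\<alpha> * \<beta> = - (c * s / 2)"
    using assms(1) unfolding s_def by (simp add: field_simps)
  then have "\<alpha>\<^sup>2 * \<beta>\<^sup>2 = (c * s / 2)\<^sup>2"
    by (metis power_mult_distrib power2_minus)
  then have "(q * s - \<alpha>\<^sup>2) * (q * s - \<beta>\<^sup>2) = s\<^sup>2 * (c\<^sup>2 / 4 - q * (1 - q))"
    by (simp add: s_def power2_eq_square algebra_simps)
  also have "\<dots> \<le> 0"
    using assms(2) by (simp add: mult_nonneg_nonpos)
  finally show "(q * (\<alpha>\<^sup>2 + \<beta>\<^sup>2) - \<alpha>\<^sup>2) * (q * (\<alpha>\<^sup>2 + \<beta>\<^sup>2) - \<beta>\<^sup>2) \<le> 0"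
    by (simp add: s_def)
qed

lemma sum_mixed_squares:
  fixes x :: "'i \<Rightarrow> real" and p q \<alpha> \<beta> y :: real
  assumes "finite A"
  shows "(\<Sum>i\<in>A. p * (\<alpha> * y + \<beta> * x i)\<^sup>2 + q * (\<alpha> * x i + \<beta> * y)\<^sup>2)
    = (p * \<beta>\<^sup>2 + q * \<alpha>\<^sup>2) * (\<Sum>i\<in>A. (x i)\<^sup>2) + card A * (p * \<alpha>\<^sup>2 + q * \<beta>\<^sup>2) * y\<^sup>2
      + 2 * (p + q) * (\<alpha> * \<beta>) * y * (\<Sum>i\<in>A. x i)"
proof -
  have "p * (\<alpha> * y + \<beta> * x i)\<^sup>2 + q * (\<alpha> * x i + \<beta> * y)\<^sup>2
    = (p * \<beta>\<^sup>2 + q * \<alpha>\<^sup>2) * (x i)\<^sup>2 + (p * \<alpha>\<^sup>2 + q * \<beta>\<^sup>2) * y\<^sup>2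
      + 2 * (p + q) * (\<alpha> * \<beta>) * y * x i" for i
    by (simp add: power2_sum algebra_simps)
  then show ?thesis
    by (simp add: sum.distrib sum_distrib_left)
qed

lemma mixed_frame_identity:
  fixes x :: "'i::finite \<Rightarrow> real" and \<alpha> \<beta> c t1 t2 N y :: real
  defines "n \<equiv> real CARD('i)" and "s \<equiv> \<alpha>\<^sup>2 + \<beta>\<^sup>2"
  assumes "n \<noteq> 1"
    and s_eq: "s + 2 * (\<alpha> * \<beta>) * c = 1" and p_eq: "s * c + 2 * (\<alpha> * \<beta>) = 0"
    and "t1 + t2 = 1" and weight: "t1 * \<beta>\<^sup>2 + t2 * \<alpha>\<^sup>2 = (n - 1) / n * s"
    and sum_sq: "(\<Sum>i\<in>UNIV. (x i)\<^sup>2) = n * (1 - c\<^sup>2) / (n - 1) * (N - y\<^sup>2) + n * c\<^sup>2 * y\<^sup>2"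
    and sum: "(\<Sum>i\<in>UNIV. x i) = n * c * y"
  shows "(\<Sum>i\<in>UNIV. t1 * (\<alpha> * y + \<beta> * x i)\<^sup>2 + t2 * (\<alpha> * x i + \<beta> * y)\<^sup>2) = N"
proof -
  have "n \<noteq> 0" "n - 1 \<noteq> 0"
    using \<open>n \<noteq> 1\<close> by (simp_all add: n_def)
  have p: "2 * (\<alpha> * \<beta>) = - (s * c)"
    using p_eq by linarith
  have "s + - (s * c) * c = 1"
    using s_eq unfolding p .
  then have s_c: "s * (1 - c\<^sup>2) = 1"
    by (simp add: power2_eq_square algebra_simps)
  have "t1 * \<alpha>\<^sup>2 + t2 * \<beta>\<^sup>2 = (t1 + t2) * s - (t1 * \<beta>\<^sup>2 + t2 * \<alpha>\<^sup>2)"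
    by (simp add: s_def algebra_simps)
  then have weight_dual: "n * (t1 * \<alpha>\<^sup>2 + t2 * \<beta>\<^sup>2) = s"
    using \<open>t1 + t2 = 1\<close> \<open>n \<noteq> 0\<close> by (simp add: weight field_simps)
  have sq_part: "(t1 * \<beta>\<^sup>2 + t2 * \<alpha>\<^sup>2) * (\<Sum>i\<in>UNIV. (x i)\<^sup>2)
      = s * (1 - c\<^sup>2) * (N - y\<^sup>2) + (n - 1) * s * c\<^sup>2 * y\<^sup>2"
    using \<open>n \<noteq> 0\<close> \<open>n - 1 \<noteq> 0\<close> unfolding weight sum_sq by (simp add: field_simps)
  have "(\<Sum>i\<in>UNIV. t1 * (\<alpha> * y + \<beta> * x i)\<^sup>2 + t2 * (\<alpha> * x i + \<beta> * y)\<^sup>2)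
      = (t1 * \<beta>\<^sup>2 + t2 * \<alpha>\<^sup>2) * (\<Sum>i\<in>UNIV. (x i)\<^sup>2) + n * (t1 * \<alpha>\<^sup>2 + t2 * \<beta>\<^sup>2) * y\<^sup>2
        + 2 * (\<alpha> * \<beta>) * y * (\<Sum>i\<in>UNIV. x i)"
    using sum_mixed_squares[OF finite_class.finite_UNIV, where p=t1 and q=t2 and \<alpha>=\<alpha>
        and \<beta>=\<beta> and x=x and y=y] \<open>t1 + t2 = 1\<close>
    by (simp add: n_def)
  also have "\<dots> = (s * (1 - c\<^sup>2) * (N - y\<^sup>2) + (n - 1) * s * c\<^sup>2 * y\<^sup>2) + s * y\<^sup>2
      + - (s * c) * y * (n * c * y)"
    unfolding sq_part weight_dual p sum ..
  also have "\<dots> = s * (1 - c\<^sup>2) * N"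
    by (simp add: power2_eq_square algebra_simps)
  finally show ?thesis
    by (simp add: s_c)
qed

lemma ramanujan_bound_normalised:
  fixes lam n :: real
  assumes "n \<ge> 3" and "\<bar>lam\<bar> \<le> 2 * sqrt (n - 1)"
  shows "(lam / n)\<^sup>2 < 1" and "(lam / n)\<^sup>2 \<le> 4 * ((n - 1) / n) * (1 - (n - 1) / n)"
proof -
  have "\<bar>lam\<bar>\<^sup>2 \<le> (2 * sqrt (n - 1))\<^sup>2"
    using assms by (intro power_mono) simp_all
  then have lam_sq: "lam\<^sup>2 \<le> 4 * (n - 1)"
    using \<open>n \<ge> 3\<close> by (simp add: power_mult_distrib)
  have "0 < (n - 2)\<^sup>2"
    using \<open>n \<ge> 3\<close> by simp
  with lam_sq have "lam\<^sup>2 < n\<^sup>2"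
    by (simp add: power2_eq_square algebra_simps)
  then show "(lam / n)\<^sup>2 < 1"
    using \<open>n \<ge> 3\<close> by (simp add: power_divide)
  show "(lam / n)\<^sup>2 \<le> 4 * ((n - 1) / n) * (1 - (n - 1) / n)"
    using lam_sq \<open>n \<ge> 3\<close> by (simp add: power_divide power2_eq_square field_simps)
qed

theorem mainTheorem16:
  fixes v :: "'n::finite \<Rightarrow> real ^ 'n" and w :: "real ^ 'n"
    and lam \<alpha> \<beta> :: real
  defines "d \<equiv> CARD('n)"
  assumes d3: "d \<ge> 3"
    and hlam: "\<bar>lam\<bar> \<le> 2 * sqrt (real d - 1)"
    and vunit: "\<And>i. norm (v i) = 1"
    and wunit: "norm w = 1"
    and vv: "\<And>i j. i \<noteq> j \<Longrightarrow> v i \<bullet> v j = (lam\<^sup>2 - real d) / (real d * (real d - 1))"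
    and vw: "\<And>i. v i \<bullet> w = lam / real d"
    and orth: "\<And>i. (\<alpha> *\<^sub>R w + \<beta> *\<^sub>R v i) \<bullet> (\<alpha> *\<^sub>R v i + \<beta> *\<^sub>R w) = 0"
    and anorm: "\<And>i. norm (\<alpha> *\<^sub>R w + \<beta> *\<^sub>R v i) = 1"
    and bnorm: "\<And>i. norm (\<alpha> *\<^sub>R v i + \<beta> *\<^sub>R w) = 1"
  shows "\<exists>t1 t2. t1 \<ge> 0 \<and> t2 \<ge> 0 \<and> t1 + t2 = 1 \<and>
    (\<forall>u :: real ^ 'n. (norm u)\<^sup>2 =
       (\<Sum>i\<in>UNIV. t1 * (u \<bullet> (\<alpha> *\<^sub>R w + \<beta> *\<^sub>R v i))\<^sup>2
                   + t2 * (u \<bullet> (\<alpha> *\<^sub>R v i + \<beta> *\<^sub>R w))\<^sup>2))"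
proof -
  \<comment> \<open>\<open>bnorm\<close> is redundant: \<open>\<parallel>b\<^sub>i\<parallel> = \<parallel>a\<^sub>i\<parallel>\<close> as \<open>v\<^sub>i\<close> and \<open>w\<close> are unit vectors.\<close>
  define n where "n = real d"
  define c where "c = lam / n"
  have "n \<ge> 3"
    using d3 by (simp add: n_def)
  have "c\<^sup>2 < 1" and c_sq: "c\<^sup>2 \<le> 4 * ((n - 1) / n) * (1 - (n - 1) / n)"
    using ramanujan_bound_normalised[OF \<open>n \<ge> 3\<close> hlam[folded n_def]] by (simp_all add: c_def)
  have vv': "v i \<bullet> v j = (n * c\<^sup>2 - 1) / (n - 1)" if "i \<noteq> j" for i j
    using vv[OF that] \<open>n \<ge> 3\<close> by (simp add: c_def n_def field_simps power2_eq_square)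
  have vw': "v i \<bullet> w = c" for i
    using vw by (simp add: c_def n_def)
  obtain i :: 'n where True by simp
  have coeff: "(\<alpha>\<^sup>2 + \<beta>\<^sup>2) + 2 * (\<alpha> * \<beta>) * c = 1"
    "(\<alpha>\<^sup>2 + \<beta>\<^sup>2) * c + 2 * (\<alpha> * \<beta>) = 0"
    using unit_pair_coefficients[OF vunit wunit anorm orth, of i] by (simp_all add: vw')
  obtain t1 t2 where t: "t1 \<ge> 0" "t2 \<ge> 0" "t1 + t2 = 1"
    and weight: "t1 * \<beta>\<^sup>2 + t2 * \<alpha>\<^sup>2 = (n - 1) / n * (\<alpha>\<^sup>2 + \<beta>\<^sup>2)"
    using mixing_weights_exist[OF coeff(2) c_sq] by blast
  have "(norm u)\<^sup>2 = (\<Sum>i\<in>UNIV. t1 * (u \<bullet> (\<alpha> *\<^sub>R w + \<beta> *\<^sub>R v i))\<^sup>2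
      + t2 * (u \<bullet> (\<alpha> *\<^sub>R v i + \<beta> *\<^sub>R w))\<^sup>2)" for u :: "real ^ 'n"
  proof -
    have "(\<Sum>i\<in>UNIV. t1 * (\<alpha> * (u \<bullet> w) + \<beta> * (u \<bullet> v i))\<^sup>2
        + t2 * (\<alpha> * (u \<bullet> v i) + \<beta> * (u \<bullet> w))\<^sup>2) = u \<bullet> u"
      using sum_inner_equiangular[where v=v and w=w and c=c and u=u] \<open>c\<^sup>2 < 1\<close> vunit wunit vv' vw'
        d3 coeff t(3) weight
      by (intro mixed_frame_identity[where c=c]) (simp_all add: n_def d_def)
    then show ?thesis
      by (simp add: inner_add_right power2_norm_eq_inner)
  qed
  with t show ?thesis
    by blast
qed

end
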